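(* Let $G$ be a group and $H$ a core-free subgroup of $G$. If $H$ has a right transversal $S$ in $G$ which generates $G$ and which is nilpotent with respect to its induced right loop structure, then $H$ is solvable.
   Context: For $H\le G$, a right transversal $S$ contains exactly one element of each right coset $Hg$, with $1\in S$; its induced operation is $x\circ y=$ the unique element of $S\cap Hxy$, making $(S,\circ)$ a right loop (two-sided identity, each equation $X\circ a=b$ uniquely solvable). $H$ is core-free if $\bigcap_{g\in G}g^{-1}Hg=\{1\}$. A congruence on a right loop $S$ is an equivalence relation which is a right subloop of $S\times S$; an invariant right subloop is the class $T$ of $1$ under a congruence, $S/T=\{T\circ x\}$ with $(T\circ x)\circ(T\circ y)=T\circ(x\circ y)$. For congruences $\beta,\gamma$, $\gamma$ centralizes $\beta$ if there is a congruence $(\gamma|\beta)$ on the right loop $\beta\subseteq S\times S$ with: (i) $(x,y)(\gamma|\beta)(u,v)\Rightarrow x\gamma u$; (ii) for $(x,y)\in\beta$, $(u,v)\mapsto u$ is a bijection from the $(\gamma|\beta)$-class of $(x,y)$ to the $\gamma$-class of $x$; (iii) $(x,y)\in\gamma\Rightarrow(x,x)(\gamma|\beta)(y,y)$; (iv) $(x,y)(\gamma|\beta)(u,v)\Rightarrow(y,x)(\gamma|\beta)(v,u)$; (v) $(x,y)(\gamma|\beta)(u,v)$, $(y,z)(\gamma|\beta)(v,w)\Rightarrow(x,z)(\gamma|\beta)(u,w)$. The center $\mathcal Z(S)$ is the class of $1$ under the unique maximal congruence centralized by $S\times S$. $S$ is nilpotent if the series $\mathcal Z_0=\{1\}$,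 $\mathcal Z_1=\mathcal Z(S)$, $\mathcal Z_{i+1}/\mathcal Z_i=\mathcal Z(S/\mathcal Z_i)$ reaches $\mathcal Z_n=S$ for some $n$. *)

theory Defs
  imports "HOL-Algebra.Solvable_Groups" "HOL-Algebra.Generated_Groups" "HOL-Algebra.Coset"
begin

definition right_transversal :: "('a, 'b) monoid_scheme \<Rightarrow> 'a set \<Rightarrow> 'a set \<Rightarrow> bool" where
  "right_transversal G H S \<longleftrightarrow> S \<subseteq> carrier G \<and> \<one>\<^bsub>G\<^esub> \<in> S \<and>
     (\<forall>g\<in>carrier G. \<exists>!s. s \<in> S \<and> s \<in> H #>\<^bsub>G\<^esub> g)"

definition transversal_op :: "('a, 'b) monoid_scheme \<Rightarrow> 'a set \<Rightarrow> 'a set \<Rightarrow> 'a \<Rightarrow> 'a \<Rightarrow> 'a" where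
  "transversal_op G H S x y = (THE s. s \<in> S \<and> s \<in> H #>\<^bsub>G\<^esub> (x \<otimes>\<^bsub>G\<^esub> y))"

definition core_free :: "('a, 'b) monoid_scheme \<Rightarrow> 'a set \<Rightarrow> bool" where
  "core_free G H \<longleftrightarrow>
     (\<Inter>g\<in>carrier G. {inv\<^bsub>G\<^esub> g \<otimes>\<^bsub>G\<^esub> h \<otimes>\<^bsub>G\<^esub> g | h. h \<in> H}) = {\<one>\<^bsub>G\<^esub>}"

definition right_loop :: "'a set \<Rightarrow> ('a \<Rightarrow> 'a \<Rightarrow> 'a) \<Rightarrow> 'a \<Rightarrow> bool" where
  "right_loop A m e \<longleftrightarrow> e \<in> A \<and> (\<forall>x\<in>A. \<forall>y\<in>A. m x y \<in> A) \<and>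
     (\<forall>x\<in>A. m e x = x \<and> m x e = x) \<and> (\<forall>a\<in>A. \<forall>b\<in>A. \<exists>!x. x \<in> A \<and> m x a = b)"

definition rdiv :: "'a set \<Rightarrow> ('a \<Rightarrow> 'a \<Rightarrow> 'a) \<Rightarrow> 'a \<Rightarrow> 'a \<Rightarrow> 'a" where
  "rdiv A m b a = (THE x. x \<in> A \<and> m x a = b)"

definition right_subloop :: "'a set \<Rightarrow> ('a \<Rightarrow> 'a \<Rightarrow> 'a) \<Rightarrow> 'a \<Rightarrow> 'a set \<Rightarrow> bool" where
  "right_subloop A m e B \<longleftrightarrow> B \<subseteq> A \<and> e \<in> B \<and> (\<forall>x\<in>B. \<forall>y\<in>B. m x y \<in> B) \<and>
     (\<forall>a\<in>B. \<forall>b\<in>B. rdiv A m b a \<in> B)"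

definition pair_op :: "('a \<Rightarrow> 'a \<Rightarrow> 'a) \<Rightarrow> 'a \<times> 'a \<Rightarrow> 'a \<times> 'a \<Rightarrow> 'a \<times> 'a" where
  "pair_op m p q = (m (fst p) (fst q), m (snd p) (snd q))"

definition loop_congruence :: "'a set \<Rightarrow> ('a \<Rightarrow> 'a \<Rightarrow> 'a) \<Rightarrow> 'a \<Rightarrow> ('a \<times> 'a) set \<Rightarrow> bool" where
  "loop_congruence A m e \<rho> \<longleftrightarrow> equiv A \<rho> \<and> right_subloop (A \<times> A) (pair_op m) (e, e) \<rho>"

text \<open>gamma centralizes beta (both congruences on the right loop (A,m,e))\<close>
definition centralizes :: "'a set \<Rightarrow> ('a \<Rightarrow> 'a \<Rightarrow> 'a) \<Rightarrow> 'a \<Rightarrow> ('a \<times> 'a) set \<Rightarrow> ('a \<times> 'a) set \<Rightarrow> bool" where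
  "centralizes A m e \<gamma> \<beta> \<longleftrightarrow> loop_congruence A m e \<gamma> \<and> loop_congruence A m e \<beta> \<and>
     (\<exists>\<delta>. loop_congruence \<beta> (pair_op m) (e, e) \<delta> \<and>
       (\<forall>x y u v. ((x, y), (u, v)) \<in> \<delta> \<longrightarrow> (x, u) \<in> \<gamma>) \<and>
       (\<forall>x y. (x, y) \<in> \<beta> \<longrightarrow> bij_betw fst {p. ((x, y), p) \<in> \<delta>} {u. (x, u) \<in> \<gamma>}) \<and>
       (\<forall>x y. (x, y) \<in> \<gamma> \<longrightarrow> ((x, x), (y, y)) \<in> \<delta>) \<and>
       (\<forall>x y u v. ((x, y), (u, v)) \<in> \<delta> \<longrightarrow> ((y, x), (v, u)) \<in> \<delta>) \<and>
       (\<forall>x y z u v w. ((x, y), (u, v)) \<in> \<delta> \<longrightarrow> ((y, z), (v, w)) \<in> \<delta> \<longrightarrow>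
           ((x, z), (u, w)) \<in> \<delta>))"

definition center_congruence :: "'a set \<Rightarrow> ('a \<Rightarrow> 'a \<Rightarrow> 'a) \<Rightarrow> 'a \<Rightarrow> ('a \<times> 'a) set" where
  "center_congruence A m e =
     (GREATEST \<gamma>. loop_congruence A m e \<gamma> \<and> centralizes A m e (A \<times> A) \<gamma>)"

definition loop_center :: "'a set \<Rightarrow> ('a \<Rightarrow> 'a \<Rightarrow> 'a) \<Rightarrow> 'a \<Rightarrow> 'a set" where
  "loop_center A m e = {x \<in> A. (e, x) \<in> center_congruence A m e}"

definition subloop_rel :: "'a set \<Rightarrow> ('a \<Rightarrow> 'a \<Rightarrow> 'a) \<Rightarrow> 'a set \<Rightarrow> ('a \<times> 'a) set" where
  "subloop_rel A m T = {(x, y). x \<in> A \<and> y \<in> A \<and> (\<exists>t\<in>T. x = m t y)}"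

text \<open>S/T: carrier A // rho (the cosets T o x), operation (T o x)(T o y) = T o (x o y)\<close>
definition quot_op :: "('a \<Rightarrow> 'a \<Rightarrow> 'a) \<Rightarrow> ('a \<times> 'a) set \<Rightarrow> 'a set \<Rightarrow> 'a set \<Rightarrow> 'a set" where
  "quot_op m \<rho> X Y = \<rho> `` {m (SOME x. x \<in> X) (SOME y. y \<in> Y)}"

text \<open>upper central series: Z_0 = {1}, Z_(i+1)/Z_i = Z(S/Z_i)\<close>
primrec upper_central :: "'a set \<Rightarrow> ('a \<Rightarrow> 'a \<Rightarrow> 'a) \<Rightarrow> 'a \<Rightarrow> nat \<Rightarrow> 'a set" where
  "upper_central A m e 0 = {e}"
| "upper_central A m e (Suc i) =
     (let \<rho> = subloop_rel A m (upper_central A m e i)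
      in \<Union> (loop_center (A // \<rho>) (quot_op m \<rho>) (\<rho> `` {e})))"

definition nilpotent_right_loop :: "'a set \<Rightarrow> ('a \<Rightarrow> 'a \<Rightarrow> 'a) \<Rightarrow> 'a \<Rightarrow> bool" where
  "nilpotent_right_loop A m e \<longleftrightarrow> (\<exists>n. upper_central A m e n = A)"

end

theory Submission
  imports Defs
begin

(* G acts on S from the right by  s . g = the representative of Hsg;
   the action of s in S is right multiplication in the loop, and it is faithful since H is core-free.
   The proof shows that G itself is solvable; H, a subgroup, then is solvable too.

   1. Right loops: right division and its behaviour on the direct square S x S.
   2. The center of a right loop is described explicitly: the center congruence is x ~ x o w
      with w ranging over the "central" elements, those commuting and associating with everything.
   3. Congruences of S, quotient right loops S/theta and pulled-back congruences; the upper central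
      series becomes a chain of congruences theta_0 = Id, ..., theta_n = S x S.
   4. The action of G on S respects every congruence, and (since G is generated by S) it commutes
      with left multiplication by central elements of each quotient S/theta.
   5. Let K(theta) be the subgroup of elements acting trivially on S/theta.  By 4, elements of
      K(theta_(i+1)) act on S/theta_i as left multiplication by central elements, which commute,
      so  [K(theta_(i+1)), K(theta_(i+1))] <= K(theta_i).  As K(theta_n) = G and K(theta_0) = 1
      by faithfulness, the derived series of G reaches 1 after n steps. *)

section \<open>Right loops\<close>

lemma rdiv_eqI:
  assumes "x \<in> B" "op x a = b" "\<And>y. y \<in> B \<Longrightarrow> op y a = b \<Longrightarrow> y = x"
  shows "rdiv B op b a = x"
  unfolding rdiv_def using assms by (intro the_equality) blast+

locale rloop =
  fixes A :: "'a set" and m :: "'a \<Rightarrow> 'a \<Rightarrow> 'a" and e :: 'a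
  assumes right_loop: "right_loop A m e"
begin

lemma e_in [simp]: "e \<in> A"
  using right_loop unfolding right_loop_def by blast

lemma m_in [simp]: "x \<in> A \<Longrightarrow> y \<in> A \<Longrightarrow> m x y \<in> A"
  using right_loop unfolding right_loop_def by blast

lemma e_left [simp]: "x \<in> A \<Longrightarrow> m e x = x"
  using right_loop unfolding right_loop_def by blast

lemma e_right [simp]: "x \<in> A \<Longrightarrow> m x e = x"
  using right_loop unfolding right_loop_def by blast

lemma unique_right_solution: "a \<in> A \<Longrightarrow> b \<in> A \<Longrightarrow> \<exists>!x. x \<in> A \<and> m x a = b"
  using right_loop unfolding right_loop_def by blast

lemma right_cancel:
  assumes "x \<in> A" "y \<in> A" "a \<in> A" "m x a = m y a"
  shows "x = y"
  using unique_right_solution[of a "m y a"] assms by auto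

definition dv :: "'a \<Rightarrow> 'a \<Rightarrow> 'a" where
  "dv b a = rdiv A m b a"

lemma dv_prop: "a \<in> A \<Longrightarrow> b \<in> A \<Longrightarrow> dv b a \<in> A \<and> m (dv b a) a = b"
  unfolding dv_def rdiv_def by (rule theI'[OF unique_right_solution])

lemma dv_in [simp]: "a \<in> A \<Longrightarrow> b \<in> A \<Longrightarrow> dv b a \<in> A"
  using dv_prop by blast

lemma dv_mul [simp]: "a \<in> A \<Longrightarrow> b \<in> A \<Longrightarrow> m (dv b a) a = b"
  using dv_prop by blast

lemma dv_eq: "x \<in> A \<Longrightarrow> a \<in> A \<Longrightarrow> m x a = b \<Longrightarrow> dv b a = x"
  unfolding dv_def by (rule rdiv_eqI) (auto intro: right_cancel)

lemma dv_mul_cancel [simp]: "x \<in> A \<Longrightarrow> a \<in> A \<Longrightarrow> dv (m x a) a = x"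
  by (rule dv_eq) auto

lemma dv_self [simp]: "a \<in> A \<Longrightarrow> dv a a = e"
  by (rule dv_eq) auto

lemma rdiv_pair:
  assumes "a1 \<in> A" "a2 \<in> A" "b1 \<in> A" "b2 \<in> A"
  shows "rdiv (A \<times> A) (pair_op m) (b1, b2) (a1, a2) = (dv b1 a1, dv b2 a2)"
proof (rule rdiv_eqI)
  fix y assume "y \<in> A \<times> A" "pair_op m y (a1, a2) = (b1, b2)"
  then show "y = (dv b1 a1, dv b2 a2)"
    using assms by (cases y) (auto simp: pair_op_def dv_eq)
qed (use assms in \<open>auto simp: pair_op_def\<close>)

lemma square_square_cancel:
  assumes "Y \<in> (A \<times> A) \<times> (A \<times> A)" "X \<in> (A \<times> A) \<times> (A \<times> A)" "a \<in> (A \<times> A) \<times> (A \<times> A)"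
    and "pair_op (pair_op m) Y a = pair_op (pair_op m) X a"
  shows "Y = X"
proof -
  obtain y1 y2 y3 y4 x1 x2 x3 x4 a1 a2 a3 a4
    where "Y = ((y1, y2), (y3, y4))" "X = ((x1, x2), (x3, x4))" "a = ((a1, a2), (a3, a4))"
    by (metis prod.collapse)
  then show ?thesis
    using assms right_cancel[of y1 x1 a1] right_cancel[of y2 x2 a2] right_cancel[of y3 x3 a3]
      right_cancel[of y4 x4 a4]
    by (auto simp: pair_op_def)
qed


section \<open>The center of a right loop\<close>

text \<open>Central elements commute with everything and can be moved freely inside products;
  they form the center of the right loop (lemma \<open>loop_center_eq\<close> below).\<close>
definition central :: "'a set" where
  "central = {z \<in> A. \<forall>x\<in>A. \<forall>y\<in>A.
     m z x = m x z \<and> m (m x y) z = m x (m y z) \<and> m (m x z) y = m (m x y) z}"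

lemma centralI:
  assumes "z \<in> A"
    and "\<And>x y. x \<in> A \<Longrightarrow> y \<in> A \<Longrightarrow>
           m z x = m x z \<and> m (m x y) z = m x (m y z) \<and> m (m x z) y = m (m x y) z"
  shows "z \<in> central"
  using assms unfolding central_def by auto

lemma central_in: "z \<in> central \<Longrightarrow> z \<in> A"
  unfolding central_def by auto

lemma central_comm: "z \<in> central \<Longrightarrow> x \<in> A \<Longrightarrow> m z x = m x z"
  unfolding central_def by auto

lemma central_assoc: "z \<in> central \<Longrightarrow> x \<in> A \<Longrightarrow> y \<in> A \<Longrightarrow> m (m x y) z = m x (m y z)"
  unfolding central_def by auto

lemma central_shift: "z \<in> central \<Longrightarrow> x \<in> A \<Longrightarrow> y \<in> A \<Longrightarrow> m (m x z) y = m (m x y) z"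
  unfolding central_def by auto

lemma e_central [simp]: "e \<in> central"
  by (rule centralI) auto

lemma central_left_assoc:
  assumes "z \<in> central" "x \<in> A" "y \<in> A"
  shows "m (m z x) y = m z (m x y)"
proof -
  have "m (m z x) y = m (m x z) y" using central_comm[OF assms(1,2)] by simp
  also have "\<dots> = m (m x y) z" using central_shift[OF assms] .
  also have "\<dots> = m z (m x y)" using central_comm[OF assms(1)] assms by simp
  finally show ?thesis .
qed

lemma central_mul:
  assumes z: "z \<in> central" and w: "w \<in> central"
  shows "m z w \<in> central"
proof (rule centralI)
  have zA: "z \<in> A" and wA: "w \<in> A" using assms central_in by auto
  show "m z w \<in> A" using zA wA by simp
  fix x y assume x: "x \<in> A" and y: "y \<in> A"
  have "m (m z w) x = m (m z x) w" using central_shift[OF w zA x] .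
  also have "\<dots> = m (m x z) w" using central_comm[OF z x] by simp
  also have "\<dots> = m x (m z w)" using central_assoc[OF w x zA] .
  finally have comm: "m (m z w) x = m x (m z w)" .
  have "m (m x y) (m z w) = m (m (m x y) z) w" using central_assoc[OF w _ zA, of "m x y"] x y by simp
  also have "\<dots> = m (m x (m y z)) w" using central_assoc[OF z x y] by simp
  also have "\<dots> = m x (m (m y z) w)" using central_assoc[OF w x, of "m y z"] y zA by simp
  also have "\<dots> = m x (m y (m z w))" using central_assoc[OF w y zA] by simp
  finally have assoc: "m (m x y) (m z w) = m x (m y (m z w))" .
  have "m (m x (m z w)) y = m (m (m x z) w) y" using central_assoc[OF w x zA] by simp
  also have "\<dots> = m (m (m x z) y) w" using central_shift[OF w _ y, of "m x z"] x zA by simp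
  also have "\<dots> = m (m (m x y) z) w" using central_shift[OF z x y] by simp
  also have "\<dots> = m (m x y) (m z w)" using central_assoc[OF w _ zA, of "m x y"] x y by simp
  finally have shift: "m (m x (m z w)) y = m (m x y) (m z w)" .
  show "m (m z w) x = m x (m z w) \<and> m (m x y) (m z w) = m x (m y (m z w)) \<and>
      m (m x (m z w)) y = m (m x y) (m z w)" using comm assoc shift by blast
qed

text \<open>Each defining identity for \<open>c = dv v w\<close> follows by right-cancelling \<open>w\<close>
  from the corresponding identity for \<open>v = m c w\<close>.\<close>
lemma central_dv:
  assumes v: "v \<in> central" and w: "w \<in> central"
  shows "dv v w \<in> central"
proof -
  have vA: "v \<in> A" and wA: "w \<in> A" using assms central_in by auto
  define c where "c = dv v w"
  have cA: "c \<in> A" and cw: "m c w = v" using vA wA by (auto simp: c_def)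
  have "m c x = m x c \<and> m (m x y) c = m x (m y c) \<and> m (m x c) y = m (m x y) c"
    if x: "x \<in> A" and y: "y \<in> A" for x y
  proof (intro conjI)
    show "m c x = m x c"
    proof (rule right_cancel[OF _ _ wA])
      have "m (m c x) w = m (m c w) x" using central_shift[OF w cA x] by simp
      also have "\<dots> = m x v" using cw central_comm[OF v x] by simp
      also have "\<dots> = m (m x c) w" using central_assoc[OF w x cA] cw by simp
      finally show "m (m c x) w = m (m x c) w" .
    qed (use cA x in auto)
    show "m (m x y) c = m x (m y c)"
    proof (rule right_cancel[OF _ _ wA])
      have "m (m (m x y) c) w = m (m x y) v" using central_assoc[OF w _ cA, of "m x y"] x y cw by simp
      also have "\<dots> = m x (m y v)" using central_assoc[OF v x y] .
      also have "\<dots> = m (m x (m y c)) w"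
        using central_assoc[OF w x, of "m y c"] central_assoc[OF w y cA] x y cA cw by simp
      finally show "m (m (m x y) c) w = m (m x (m y c)) w" .
    qed (use cA x y in auto)
    show "m (m x c) y = m (m x y) c"
    proof (rule right_cancel[OF _ _ wA])
      have "m (m (m x c) y) w = m (m (m x c) w) y" using central_shift[OF w _ y, of "m x c"] x cA by simp
      also have "\<dots> = m (m x v) y" using central_assoc[OF w x cA] cw by simp
      also have "\<dots> = m (m x y) v" using central_shift[OF v x y] .
      also have "\<dots> = m (m (m x y) c) w" using central_assoc[OF w _ cA, of "m x y"] x y cw by simp
      finally show "m (m (m x c) y) w = m (m (m x y) c) w" .
    qed (use cA x y in auto)
  qed
  then show ?thesis unfolding c_def[symmetric] using cA by (intro centralI)
qed

lemma central_swap: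
  assumes "z \<in> central" "w \<in> central" "x \<in> A"
  shows "m z (m w x) = m w (m z x)"
proof -
  have "m z (m w x) = m (m z w) x" using central_left_assoc[OF assms(1) _ assms(3), of w] central_in assms by simp
  also have "\<dots> = m (m w z) x" using central_comm[OF assms(1), of w] central_in assms by simp
  also have "\<dots> = m w (m z x)" using central_left_assoc[OF assms(2) _ assms(3), of z] central_in assms by simp
  finally show ?thesis .
qed

lemma central_dv_left:
  assumes "z \<in> central" "x \<in> A" "a \<in> A"
  shows "dv (m z x) a = m z (dv x a)"
  using central_left_assoc[OF assms(1) _ assms(3), of "dv x a"] central_in assms by (intro dv_eq) auto

lemma mul_central_twist:
  assumes "x \<in> A" "x' \<in> A" "w \<in> central" "w' \<in> central"
  shows "m (m x w) (m x' w') = m (m x x') (m w w')"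
proof -
  have wA: "w \<in> A" "w' \<in> A" using assms central_in by auto
  have "m (m x w) (m x' w') = m (m (m x w) x') w'"
    using central_assoc[OF assms(4), of "m x w" x'] assms wA by simp
  also have "\<dots> = m (m (m x x') w) w'" using central_shift[OF assms(3) assms(1,2)] by simp
  also have "\<dots> = m (m x x') (m w w')" using central_assoc[OF assms(4), of "m x x'" w] assms wA by simp
  finally show ?thesis .
qed

lemma dv_central_twist:
  assumes "p \<in> A" "x \<in> A" "v \<in> central" "w \<in> central"
  shows "dv (m p v) (m x w) = m (dv p x) (dv v w)"
  using mul_central_twist[OF dv_in[OF assms(2,1)] assms(2) central_dv[OF assms(3,4)] assms(4)]
    central_dv[OF assms(3,4)] central_in assms by (intro dv_eq) auto

definition central_inv :: "'a \<Rightarrow> 'a" where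
  "central_inv w = dv e w"

lemma central_inv_central: "w \<in> central \<Longrightarrow> central_inv w \<in> central"
  unfolding central_inv_def by (rule central_dv) auto

lemma mul_central_inv:
  assumes "x \<in> A" "w \<in> central"
  shows "m (m x w) (central_inv w) = x"
proof -
  have w': "central_inv w \<in> central" "w \<in> A" using central_inv_central central_in assms by auto
  have "m w (central_inv w) = m (central_inv w) w" using central_comm[OF w'] by simp
  also have "\<dots> = e" using w' by (simp add: central_inv_def)
  finally have "m w (central_inv w) = e" .
  then show ?thesis using central_assoc[OF w'(1) assms(1) w'(2)] assms by simp
qed

lemma central_twist_inj:
  "x \<in> A \<Longrightarrow> w \<in> central \<Longrightarrow> w' \<in> central \<Longrightarrow> m x w = m x w' \<Longrightarrow> w = w'"
  using right_cancel[of w w' x] central_comm[of w x] central_comm[of w' x] central_in by simp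

text \<open>The candidate center congruence \<open>x ~ m x w\<close>, \<open>w\<close> central, and the congruence on it
  witnessing that it is centralized by \<open>A \<times> A\<close>: \<open>(x, m x w)\<close> is related to \<open>(u, m u w)\<close>.\<close>
definition center_rel :: "('a \<times> 'a) set" where
  "center_rel = {(x, m x w) | x w. x \<in> A \<and> w \<in> central}"

definition center_witness :: "(('a \<times> 'a) \<times> ('a \<times> 'a)) set" where
  "center_witness = {((x, m x w), (u, m u w)) | x u w. x \<in> A \<and> u \<in> A \<and> w \<in> central}"

lemma center_rel_iff: "(x, y) \<in> center_rel \<longleftrightarrow> x \<in> A \<and> (\<exists>w\<in>central. y = m x w)"
  unfolding center_rel_def by auto

lemma center_rel_sub: "center_rel \<subseteq> A \<times> A"
  unfolding center_rel_def using central_in by auto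

lemma center_witness_iff:
  "((x, y), (u, v)) \<in> center_witness \<longleftrightarrow> x \<in> A \<and> u \<in> A \<and> (\<exists>w\<in>central. y = m x w \<and> v = m u w)"
  unfolding center_witness_def by auto

lemma center_rel_equiv: "equiv A center_rel"
proof (rule equivI)
  show "refl_on A center_rel"
    using center_rel_sub by (auto simp: refl_on_def center_rel_iff intro!: bexI[of _ e])
  show "sym center_rel"
  proof (rule symI)
    fix x y assume "(x, y) \<in> center_rel"
    then obtain w where "x \<in> A" "w \<in> central" "y = m x w" by (auto simp: center_rel_iff)
    then show "(y, x) \<in> center_rel"
      using mul_central_inv central_inv_central central_in
      by (auto simp: center_rel_iff intro!: bexI[of _ "central_inv w"])
  qed
  show "trans center_rel"
  proof (rule transI)
    fix x y z assume "(x, y) \<in> center_rel" "(y, z) \<in> center_rel"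
    then obtain w w' where "x \<in> A" "w \<in> central" "y = m x w" "w' \<in> central" "z = m y w'"
      by (auto simp: center_rel_iff)
    then show "(x, z) \<in> center_rel"
      using central_assoc[of w' x w] central_in central_mul by (auto simp: center_rel_iff)
  qed
qed (rule center_rel_sub)

lemma center_rel_cong: "loop_congruence A m e center_rel"
  unfolding loop_congruence_def right_subloop_def
proof (intro conjI center_rel_equiv center_rel_sub ballI)
  show "(e, e) \<in> center_rel" by (auto simp: center_rel_iff intro!: bexI[of _ e])
  fix a b assume a: "a \<in> center_rel" and b: "b \<in> center_rel"
  obtain x w where a': "a = (x, m x w)" "x \<in> A" "w \<in> central" using a unfolding center_rel_def by auto
  obtain p v where b': "b = (p, m p v)" "p \<in> A" "v \<in> central" using b unfolding center_rel_def by auto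
  show "pair_op m a b \<in> center_rel"
    using a' b' mul_central_twist[of x p w v] central_mul by (auto simp: pair_op_def center_rel_iff)
  have "rdiv (A \<times> A) (pair_op m) b a = (dv p x, m (dv p x) (dv v w))"
    using a' b' central_in rdiv_pair[of x "m x w" p "m p v"] dv_central_twist[of p x v w] by simp
  then show "rdiv (A \<times> A) (pair_op m) b a \<in> center_rel"
    using a' b' central_dv by (auto simp: center_rel_iff)
qed

lemma full_cong: "loop_congruence A m e (A \<times> A)"
  unfolding loop_congruence_def right_subloop_def
  by (auto simp: pair_op_def equiv_def refl_on_def sym_def trans_def rdiv_pair)

lemma center_witness_sub: "center_witness \<subseteq> center_rel \<times> center_rel"
  unfolding center_witness_def center_rel_def by auto

lemma center_witness_equiv: "equiv center_rel center_witness"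
proof (rule equivI)
  show "refl_on center_rel center_witness"
    unfolding refl_on_def center_rel_def using center_witness_sub by (auto simp: center_witness_iff)
  show "sym center_witness"
    unfolding sym_def center_witness_def by blast
  show "trans center_witness"
  proof (rule transI)
    fix P Q R assume "(P, Q) \<in> center_witness" "(Q, R) \<in> center_witness"
    then obtain x u w u' p w' where "P = (x, m x w)" "Q = (u, m u w)" "x \<in> A" "u \<in> A" "w \<in> central"
      "Q = (u', m u' w')" "R = (p, m p w')" "p \<in> A" "w' \<in> central"
      unfolding center_witness_def by blast
    moreover then have "w = w'" using central_twist_inj by auto
    ultimately show "(P, R) \<in> center_witness" unfolding center_witness_def by blast
  qed
qed (rule center_witness_sub)

lemma center_witness_cong: "loop_congruence center_rel (pair_op m) (e, e) center_witness"
  unfolding loop_congruence_def right_subloop_def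
proof (intro conjI center_witness_equiv center_witness_sub ballI)
  show "((e, e), e, e) \<in> center_witness" by (auto simp: center_witness_iff intro!: bexI[of _ e])
  fix a b assume a: "a \<in> center_witness" and b: "b \<in> center_witness"
  obtain x u w where a': "a = ((x, m x w), (u, m u w))" "x \<in> A" "u \<in> A" "w \<in> central"
    using a unfolding center_witness_def by auto
  obtain p q v where b': "b = ((p, m p v), (q, m q v))" "p \<in> A" "q \<in> A" "v \<in> central"
    using b unfolding center_witness_def by auto
  show "pair_op (pair_op m) a b \<in> center_witness"
    using a' b' mul_central_twist[of x p w v] mul_central_twist[of u q w v] central_mul
    by (auto simp: pair_op_def center_witness_iff)
  define c where "c = dv v w"
  have c: "c \<in> central" "c \<in> A" using central_dv b' a' central_in unfolding c_def by auto
  define X where "X = ((dv p x, m (dv p x) c), (dv q u, m (dv q u) c))"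
  have X: "X \<in> center_rel \<times> center_rel" "pair_op (pair_op m) X a = b"
    using a' b' c mul_central_twist[of "dv p x" x c w] mul_central_twist[of "dv q u" u c w] central_in
    unfolding X_def c_def by (auto simp: pair_op_def center_rel_iff)
  have "rdiv (center_rel \<times> center_rel) (pair_op (pair_op m)) b a = X"
  proof (rule rdiv_eqI[where op = "pair_op (pair_op m)", OF X(1) X(2)])
    fix Y assume Y: "Y \<in> center_rel \<times> center_rel" "pair_op (pair_op m) Y a = b"
    show "Y = X"
    proof (rule square_square_cancel)
      show "Y \<in> (A \<times> A) \<times> (A \<times> A)" "X \<in> (A \<times> A) \<times> (A \<times> A)"
        using Y(1) X(1) center_rel_sub by auto
      show "a \<in> (A \<times> A) \<times> (A \<times> A)" using a' central_in by auto
      show "pair_op (pair_op m) Y a = pair_op (pair_op m) X a" using X(2) Y(2) by simp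
    qed
  qed
  then show "rdiv (center_rel \<times> center_rel) (pair_op (pair_op m)) b a \<in> center_witness"
    using a' b' c unfolding X_def by (auto simp: center_witness_iff)
qed

lemma full_centralizes_center_rel: "centralizes A m e (A \<times> A) center_rel"
  unfolding centralizes_def
proof (intro conjI full_cong center_rel_cong exI[of _ center_witness] center_witness_cong allI impI)
  fix x y u v assume "((x, y), u, v) \<in> center_witness"
  then show "(x, u) \<in> A \<times> A" by (auto simp: center_witness_iff)
next
  fix x y assume "(x, y) \<in> center_rel"
  then obtain w where w: "x \<in> A" "w \<in> central" "y = m x w" by (auto simp: center_rel_iff)
  have "{p. ((x, y), p) \<in> center_witness} = (\<lambda>u. (u, m u w)) ` A"
  proof safe
    fix u v assume "((x, y), u, v) \<in> center_witness"
    then obtain w' where "u \<in> A" "w' \<in> central" "y = m x w'" "v = m u w'"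
      by (auto simp: center_witness_iff)
    moreover then have "w' = w" using w central_twist_inj by metis
    ultimately show "(u, v) \<in> (\<lambda>u. (u, m u w)) ` A" by auto
  qed (use w in \<open>auto simp: center_witness_iff\<close>)
  then show "bij_betw fst {p. ((x, y), p) \<in> center_witness} {u. (x, u) \<in> A \<times> A}"
    using w by (auto simp: bij_betw_def inj_on_def image_image)
next
  fix x y assume "(x, y) \<in> A \<times> A"
  then show "((x, x), y, y) \<in> center_witness" by (auto simp: center_witness_iff intro!: bexI[of _ e])
next
  fix x y u v assume "((x, y), u, v) \<in> center_witness"
  then obtain w where "x \<in> A" "u \<in> A" "w \<in> central" "y = m x w" "v = m u w"
    by (auto simp: center_witness_iff)
  then show "((y, x), v, u) \<in> center_witness"
    using mul_central_inv central_inv_central central_in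
    by (auto simp: center_witness_iff intro!: bexI[of _ "central_inv w"])
next
  fix x y z u v w assume "((x, y), u, v) \<in> center_witness" "((y, z), v, w) \<in> center_witness"
  then obtain w1 w2 where "x \<in> A" "u \<in> A" "w1 \<in> central" "y = m x w1" "v = m u w1"
    "w2 \<in> central" "z = m y w2" "w = m v w2"
    by (auto simp: center_witness_iff)
  then show "((x, z), u, w) \<in> center_witness"
    using central_assoc central_in central_mul by (auto simp: center_witness_iff intro!: bexI[of _ "m w1 w2"])
qed

text \<open>Conversely, any congruence \<open>\<gamma>\<close> centralized by \<open>A \<times> A\<close> is contained in \<open>center_rel\<close>.
  We fix a witness \<open>\<delta>\<close>; its classes project bijectively onto \<open>A\<close>, which makes \<open>\<delta>\<close> a rigid tool.\<close>
context
  fixes \<gamma> :: "('a \<times> 'a) set" and \<delta> :: "(('a \<times> 'a) \<times> ('a \<times> 'a)) set"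
  assumes gam: "loop_congruence A m e \<gamma>"
    and del: "loop_congruence \<gamma> (pair_op m) (e, e) \<delta>"
    and del_bij: "\<forall>x y. (x, y) \<in> \<gamma> \<longrightarrow> bij_betw fst {p. ((x, y), p) \<in> \<delta>} {u. (x, u) \<in> A \<times> A}"
    and del_diag: "\<forall>x y. (x, y) \<in> A \<times> A \<longrightarrow> ((x, x), (y, y)) \<in> \<delta>"
begin

lemma gam_sub: "\<gamma> \<subseteq> A \<times> A"
  using gam unfolding loop_congruence_def equiv_def refl_on_def by auto

lemma del_equiv: "equiv \<gamma> \<delta>"
  using del unfolding loop_congruence_def by auto

lemma del_mul:
  "((a, b), (c, d)) \<in> \<delta> \<Longrightarrow> ((a', b'), (c', d')) \<in> \<delta> \<Longrightarrow> ((m a a', m b b'), (m c c', m d d')) \<in> \<delta>"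
  using del unfolding loop_congruence_def right_subloop_def by (force simp: pair_op_def)

lemma del_inj:
  assumes "((a, b), (u, v)) \<in> \<delta>" "((a, b), (u, v')) \<in> \<delta>"
  shows "v = v'"
proof -
  have "(a, b) \<in> \<gamma>" using del_equiv assms(1) unfolding equiv_def refl_on_def by blast
  then have "inj_on fst {p. ((a, b), p) \<in> \<delta>}" using del_bij unfolding bij_betw_def by blast
  then show ?thesis using assms unfolding inj_on_def by force
qed

lemma del_refl: "P \<in> \<gamma> \<Longrightarrow> (P, P) \<in> \<delta>"
  using del_equiv unfolding equiv_def refl_on_def by blast

lemma del_class_right: "(e, z) \<in> \<gamma> \<Longrightarrow> u \<in> A \<Longrightarrow> ((e, z), (u, m u z)) \<in> \<delta>"
  using del_mul[OF del_diag[rule_format, of e u] del_refl[of "(e, z)"]] gam_sub by auto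

lemma del_class_left: "(e, z) \<in> \<gamma> \<Longrightarrow> u \<in> A \<Longrightarrow> ((e, z), (u, m z u)) \<in> \<delta>"
  using del_mul[OF del_refl[of "(e, z)"] del_diag[rule_format, of e u]] gam_sub by auto

text \<open>Every \<open>z\<close> with \<open>e \<gamma> z\<close> is central: each defining identity compares two pairs
  with the same first component in the \<open>\<delta>\<close>-class of \<open>(e, z)\<close>.\<close>
lemma gam_class_central:
  assumes z: "(e, z) \<in> \<gamma>"
  shows "z \<in> central"
proof (rule centralI)
  show zA: "z \<in> A" using z gam_sub by auto
  fix x y assume x: "x \<in> A" and y: "y \<in> A"
  have dsym: "(Q, P) \<in> \<delta>" if "(P, Q) \<in> \<delta>" for P Q
    using del_equiv that unfolding equiv_def sym_def by blast
  have dtrans: "(P, R) \<in> \<delta>" if "(P, Q) \<in> \<delta>" "(Q, R) \<in> \<delta>" for P Q R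
    using del_equiv that unfolding equiv_def trans_def by blast
  have comm: "m z x = m x z"
    using del_inj[OF del_class_left[OF z x] del_class_right[OF z x]] .
  have "((x, m x z), (m x y, m x (m y z))) \<in> \<delta>"
    using del_mul[OF del_diag[rule_format, of x x] del_class_right[OF z y]] x by simp
  then have "((e, z), (m x y, m x (m y z))) \<in> \<delta>"
    using dtrans[OF del_class_right[OF z x]] by blast
  then have assoc: "m (m x y) z = m x (m y z)"
    using del_inj[OF del_class_right[OF z, of "m x y"]] x y by simp
  have "((m x y, m (m x z) y), (e, z)) \<in> \<delta>"
    using del_mul[OF dsym[OF del_class_right[OF z x]] del_diag[rule_format, of y e]] x y zA by simp
  then have "((e, z), (m x y, m (m x z) y)) \<in> \<delta>" by (rule dsym)
  then have shift: "m (m x z) y = m (m x y) z"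
    using del_inj[OF _ del_class_right[OF z, of "m x y"]] x y by simp
  show "m z x = m x z \<and> m (m x y) z = m x (m y z) \<and> m (m x z) y = m (m x y) z"
    using comm assoc shift by blast
qed

text \<open>A related pair \<open>(x, y)\<close> is \<open>\<delta>\<close>-related to some \<open>(e, w)\<close>; translating back gives \<open>y = m x w\<close>.\<close>
lemma gam_sub_center_rel: "\<gamma> \<subseteq> center_rel"
proof (clarify)
  fix x y assume xy: "(x, y) \<in> \<gamma>"
  have xA: "x \<in> A" using xy gam_sub by auto
  have "fst ` {p. ((x, y), p) \<in> \<delta>} = {u. (x, u) \<in> A \<times> A}"
    using del_bij xy unfolding bij_betw_def by blast
  then have "e \<in> fst ` {p. ((x, y), p) \<in> \<delta>}" using xA by simp
  then obtain w where d: "((x, y), (e, w)) \<in> \<delta>" by force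
  have ew: "(e, w) \<in> \<gamma>" using d del_equiv unfolding equiv_def refl_on_def by blast
  have "((x, y), (x, m x w)) \<in> \<delta>"
    using del_equiv d del_class_right[OF ew xA] unfolding equiv_def trans_def by blast
  then have "y = m x w" using del_inj[OF del_refl[OF xy]] by blast
  then show "(x, y) \<in> center_rel" using xA gam_class_central[OF ew] by (auto simp: center_rel_iff)
qed

end

lemma centralized_sub_center_rel:
  assumes "loop_congruence A m e \<gamma>" "centralizes A m e (A \<times> A) \<gamma>"
  shows "\<gamma> \<subseteq> center_rel"
proof -
  obtain \<delta> where "loop_congruence \<gamma> (pair_op m) (e, e) \<delta>"
    "\<forall>x y. (x, y) \<in> \<gamma> \<longrightarrow> bij_betw fst {p. ((x, y), p) \<in> \<delta>} {u. (x, u) \<in> A \<times> A}"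
    "\<forall>x y. (x, y) \<in> A \<times> A \<longrightarrow> ((x, x), (y, y)) \<in> \<delta>"
    using assms(2) unfolding centralizes_def by blast
  then show ?thesis by (rule gam_sub_center_rel[OF assms(1)])
qed

lemma center_congruence_eq: "center_congruence A m e = center_rel"
  unfolding center_congruence_def
  by (rule Greatest_equality)
    (use center_rel_cong full_centralizes_center_rel centralized_sub_center_rel in auto)

lemma loop_center_eq: "loop_center A m e = central"
  unfolding loop_center_def center_congruence_eq using central_in by (auto simp: center_rel_iff)

end

section \<open>Congruences, quotients and the upper central series\<close>

context rloop
begin

definition cong :: "('a \<times> 'a) set \<Rightarrow> bool" where
  "cong \<theta> \<longleftrightarrow> loop_congruence A m e \<theta>"

lemma cong_equiv: "cong \<theta> \<Longrightarrow> equiv A \<theta>"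
  unfolding cong_def loop_congruence_def by blast

lemma cong_in: "cong \<theta> \<Longrightarrow> (x, y) \<in> \<theta> \<Longrightarrow> x \<in> A \<and> y \<in> A"
  using cong_equiv unfolding equiv_def refl_on_def by blast

lemma cong_refl: "cong \<theta> \<Longrightarrow> x \<in> A \<Longrightarrow> (x, x) \<in> \<theta>"
  using cong_equiv unfolding equiv_def refl_on_def by blast

lemma cong_sym: "cong \<theta> \<Longrightarrow> (x, y) \<in> \<theta> \<Longrightarrow> (y, x) \<in> \<theta>"
  using cong_equiv unfolding equiv_def sym_def by blast

lemma cong_trans: "cong \<theta> \<Longrightarrow> (x, y) \<in> \<theta> \<Longrightarrow> (y, z) \<in> \<theta> \<Longrightarrow> (x, z) \<in> \<theta>"
  using cong_equiv unfolding equiv_def trans_def by blast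

lemma cong_mul: "cong \<theta> \<Longrightarrow> (x, y) \<in> \<theta> \<Longrightarrow> (x', y') \<in> \<theta> \<Longrightarrow> (m x x', m y y') \<in> \<theta>"
  unfolding cong_def loop_congruence_def right_subloop_def by (force simp: pair_op_def)

lemma cong_dv:
  assumes "cong \<theta>" "(x, y) \<in> \<theta>" "(a, b) \<in> \<theta>"
  shows "(dv x a, dv y b) \<in> \<theta>"
proof -
  have "rdiv (A \<times> A) (pair_op m) (x, y) (a, b) \<in> \<theta>"
    using assms unfolding cong_def loop_congruence_def right_subloop_def by blast
  then show ?thesis using rdiv_pair cong_in[OF assms(1)] assms(2,3) by simp
qed

lemma class_eq: "cong \<theta> \<Longrightarrow> (x, y) \<in> \<theta> \<Longrightarrow> \<theta> `` {x} = \<theta> `` {y}"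
  using cong_equiv equiv_class_eq by metis

lemma class_eq_iff: "cong \<theta> \<Longrightarrow> x \<in> A \<Longrightarrow> y \<in> A \<Longrightarrow> \<theta> `` {x} = \<theta> `` {y} \<longleftrightarrow> (x, y) \<in> \<theta>"
  using cong_equiv eq_equiv_class_iff by metis

lemma class_in_quotient: "x \<in> A \<Longrightarrow> \<theta> `` {x} \<in> A // \<theta>"
  by (rule quotientI)

lemma subloop_rel_class:
  assumes c: "cong \<theta>"
  shows "subloop_rel A m (\<theta> `` {e}) = \<theta>"
proof safe
  fix x y assume "(x, y) \<in> subloop_rel A m (\<theta> `` {e})"
  then obtain t where t: "y \<in> A" "(e, t) \<in> \<theta>" "x = m t y" unfolding subloop_rel_def by auto
  have "(m e y, m t y) \<in> \<theta>" using cong_mul[OF c t(2) cong_refl[OF c t(1)]] .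
  then show "(x, y) \<in> \<theta>" using t cong_sym[OF c] by simp
next
  fix x y assume xy: "(x, y) \<in> \<theta>"
  have A: "x \<in> A" "y \<in> A" using cong_in[OF c xy] by auto
  have "(dv x y, dv y y) \<in> \<theta>" using cong_dv[OF c xy cong_refl[OF c A(2)]] .
  then have "(e, dv x y) \<in> \<theta>" using A cong_sym[OF c] by simp
  then show "(x, y) \<in> subloop_rel A m (\<theta> `` {e})" unfolding subloop_rel_def using A by force
qed

lemma quot_op_classes:
  assumes c: "cong \<theta>" and "x \<in> A" "y \<in> A"
  shows "quot_op m \<theta> (\<theta> `` {x}) (\<theta> `` {y}) = \<theta> `` {m x y}"
proof -
  have ex: "\<exists>x'. x' \<in> \<theta> `` {x}" "\<exists>y'. y' \<in> \<theta> `` {y}" using cong_refl[OF c] assms by auto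
  have "(x, SOME x'. x' \<in> \<theta> `` {x}) \<in> \<theta>" "(y, SOME y'. y' \<in> \<theta> `` {y}) \<in> \<theta>"
    using someI_ex[OF ex(1)] someI_ex[OF ex(2)] by simp_all
  then have "(m x y, m (SOME x'. x' \<in> \<theta> `` {x}) (SOME y'. y' \<in> \<theta> `` {y})) \<in> \<theta>"
    using cong_mul[OF c] by blast
  then show ?thesis unfolding quot_op_def using class_eq[OF c] by simp
qed

lemma quotient_right_loop:
  assumes c: "cong \<theta>"
  shows "rloop (A // \<theta>) (quot_op m \<theta>) (\<theta> `` {e})"
  unfolding rloop_def right_loop_def
proof (intro conjI ballI)
  show "\<theta> `` {e} \<in> A // \<theta>" by (rule class_in_quotient) simp
  fix X assume "X \<in> A // \<theta>"
  then obtain x where x: "X = \<theta> `` {x}" "x \<in> A" by (rule quotientE)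
  show "quot_op m \<theta> (\<theta> `` {e}) X = X" "quot_op m \<theta> X (\<theta> `` {e}) = X"
    using x quot_op_classes[OF c] by simp_all
  fix Y assume "Y \<in> A // \<theta>"
  then obtain y where y: "Y = \<theta> `` {y}" "y \<in> A" by (rule quotientE)
  show "quot_op m \<theta> X Y \<in> A // \<theta>"
    using x y quot_op_classes[OF c] by (auto intro: class_in_quotient)
  show "\<exists>!Z. Z \<in> A // \<theta> \<and> quot_op m \<theta> Z X = Y"
  proof (rule ex1I[of _ "\<theta> `` {dv y x}"])
    show "\<theta> `` {dv y x} \<in> A // \<theta> \<and> quot_op m \<theta> (\<theta> `` {dv y x}) X = Y"
      using x y quot_op_classes[OF c] by (auto intro: class_in_quotient)
    fix Z assume Z: "Z \<in> A // \<theta> \<and> quot_op m \<theta> Z X = Y"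
    then obtain z where z: "Z = \<theta> `` {z}" "z \<in> A" by (auto elim: quotientE)
    have "\<theta> `` {m z x} = \<theta> `` {y}" using Z z x y quot_op_classes[OF c] by simp
    then have "(m z x, y) \<in> \<theta>" using class_eq_iff[OF c] z x y by simp
    then have "(dv (m z x) x, dv y x) \<in> \<theta>" using cong_dv[OF c _ cong_refl[OF c x(2)]] by blast
    then show "Z = \<theta> `` {dv y x}" using z x class_eq[OF c] by simp
  qed
qed

lemma quotient_dv:
  assumes c: "cong \<theta>" and "a \<in> A" "b \<in> A"
  shows "rloop.dv (A // \<theta>) (quot_op m \<theta>) (\<theta> `` {b}) (\<theta> `` {a}) = \<theta> `` {dv b a}"
proof -
  interpret Q: rloop "A // \<theta>" "quot_op m \<theta>" "\<theta> `` {e}" using quotient_right_loop[OF c] .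
  show ?thesis
    by (rule Q.dv_eq) (use assms quot_op_classes in \<open>auto intro: class_in_quotient\<close>)
qed

definition pullback :: "('a \<times> 'a) set \<Rightarrow> ('a set \<times> 'a set) set \<Rightarrow> ('a \<times> 'a) set" where
  "pullback \<theta> C = {(x, y). x \<in> A \<and> y \<in> A \<and> (\<theta> `` {x}, \<theta> `` {y}) \<in> C}"

lemma pullback_cong:
  assumes c: "cong \<theta>" and C: "loop_congruence (A // \<theta>) (quot_op m \<theta>) (\<theta> `` {e}) C"
  shows "cong (pullback \<theta> C)"
  unfolding cong_def loop_congruence_def
proof (intro conjI)
  interpret Q: rloop "A // \<theta>" "quot_op m \<theta>" "\<theta> `` {e}" using quotient_right_loop[OF c] .
  have eqC: "equiv (A // \<theta>) C" and subC:
    "right_subloop (A // \<theta> \<times> A // \<theta>) (pair_op (quot_op m \<theta>)) (\<theta> `` {e}, \<theta> `` {e}) C"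
    using C unfolding loop_congruence_def by blast+
  show "equiv A (pullback \<theta> C)"
    using eqC class_in_quotient unfolding equiv_def refl_on_def sym_def trans_def pullback_def by blast
  show "right_subloop (A \<times> A) (pair_op m) (e, e) (pullback \<theta> C)"
    unfolding right_subloop_def
  proof (intro conjI ballI)
    show "pullback \<theta> C \<subseteq> A \<times> A" unfolding pullback_def by auto
    show "(e, e) \<in> pullback \<theta> C" using subC unfolding right_subloop_def pullback_def by auto
    fix P R assume "P \<in> pullback \<theta> C" "R \<in> pullback \<theta> C"
    then obtain x y x' y' where P: "P = (x, y)" "x \<in> A" "y \<in> A" "(\<theta> `` {x}, \<theta> `` {y}) \<in> C"
      and R: "R = (x', y')" "x' \<in> A" "y' \<in> A" "(\<theta> `` {x'}, \<theta> `` {y'}) \<in> C"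
      unfolding pullback_def by auto
    have "pair_op (quot_op m \<theta>) (\<theta> `` {x}, \<theta> `` {y}) (\<theta> `` {x'}, \<theta> `` {y'}) \<in> C"
      using subC P R unfolding right_subloop_def by blast
    then show "pair_op m P R \<in> pullback \<theta> C"
      using P R quot_op_classes[OF c] unfolding pullback_def by (simp add: pair_op_def)
    have "rdiv (A // \<theta> \<times> A // \<theta>) (pair_op (quot_op m \<theta>)) (\<theta> `` {x'}, \<theta> `` {y'})
        (\<theta> `` {x}, \<theta> `` {y}) \<in> C"
      using subC P R unfolding right_subloop_def by blast
    then show "rdiv (A \<times> A) (pair_op m) R P \<in> pullback \<theta> C"
      using Q.rdiv_pair[OF class_in_quotient class_in_quotient class_in_quotient class_in_quotient]
        P R quotient_dv[OF c] rdiv_pair unfolding pullback_def by simp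
  qed
qed

fun central_series :: "nat \<Rightarrow> ('a \<times> 'a) set" where
  "central_series 0 = Id_on A"
| "central_series (Suc i) = pullback (central_series i)
     (center_congruence (A // central_series i) (quot_op m (central_series i)) (central_series i `` {e}))"

lemma Id_cong: "cong (Id_on A)"
  unfolding cong_def loop_congruence_def right_subloop_def
proof (intro conjI ballI)
  show "equiv A (Id_on A)" by (rule equivI) (auto simp: refl_on_def sym_def trans_def)
  fix P R assume "P \<in> Id_on A" "R \<in> Id_on A"
  then obtain x y where "P = (x, x)" "R = (y, y)" "x \<in> A" "y \<in> A" by auto
  then show "pair_op m P R \<in> Id_on A" "rdiv (A \<times> A) (pair_op m) R P \<in> Id_on A"
    by (auto simp: pair_op_def rdiv_pair)
qed auto

lemma union_of_classes:
  assumes c: "cong \<theta>"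
  shows "\<Union> {X \<in> A // \<theta>. P X} = {y \<in> A. P (\<theta> `` {y})}"
proof safe
  fix y X assume "y \<in> X" "X \<in> A // \<theta>" "P X"
  moreover obtain x where "X = \<theta> `` {x}" "x \<in> A" using \<open>X \<in> A // \<theta>\<close> by (rule quotientE)
  ultimately show "y \<in> A" "P (\<theta> `` {y})" using class_eq[OF c] cong_in[OF c] by auto
next
  fix y assume "y \<in> A" "P (\<theta> `` {y})"
  then show "y \<in> \<Union> {X \<in> A // \<theta>. P X}" using cong_refl[OF c] by (auto intro!: quotientI)
qed

lemma central_series_step:
  assumes c: "cong \<theta>"
  shows "center_congruence (A // \<theta>) (quot_op m \<theta>) (\<theta> `` {e}) = rloop.center_rel (A // \<theta>) (quot_op m \<theta>)"
    and "loop_congruence (A // \<theta>) (quot_op m \<theta>) (\<theta> `` {e}) (rloop.center_rel (A // \<theta>) (quot_op m \<theta>))"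
proof -
  interpret Q: rloop "A // \<theta>" "quot_op m \<theta>" "\<theta> `` {e}" using quotient_right_loop[OF c] .
  show "center_congruence (A // \<theta>) (quot_op m \<theta>) (\<theta> `` {e}) = Q.center_rel"
    by (rule Q.center_congruence_eq)
  show "loop_congruence (A // \<theta>) (quot_op m \<theta>) (\<theta> `` {e}) Q.center_rel"
    by (rule Q.center_rel_cong)
qed

lemma central_series_props: "cong (central_series i) \<and> upper_central A m e i = central_series i `` {e}"
proof (induction i)
  case 0
  then show ?case using Id_cong by auto
next
  case (Suc i)
  define \<theta> where "\<theta> = central_series i"
  have c: "cong \<theta>" and u: "upper_central A m e i = \<theta> `` {e}" using Suc unfolding \<theta>_def by auto
  let ?Z = "rloop.center_rel (A // \<theta>) (quot_op m \<theta>)"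
  have step: "central_series (Suc i) = pullback \<theta> ?Z"
    using central_series_step(1)[OF c] unfolding \<theta>_def by simp
  have "upper_central A m e (Suc i) = \<Union> (loop_center (A // \<theta>) (quot_op m \<theta>) (\<theta> `` {e}))"
    using u subloop_rel_class[OF c] by (simp add: Let_def)
  also have "\<dots> = \<Union> {X \<in> A // \<theta>. (\<theta> `` {e}, X) \<in> ?Z}"
    unfolding loop_center_def central_series_step(1)[OF c] by simp
  also have "\<dots> = {y \<in> A. (\<theta> `` {e}, \<theta> `` {y}) \<in> ?Z}" by (rule union_of_classes[OF c])
  also have "\<dots> = central_series (Suc i) `` {e}" unfolding step pullback_def by auto
  finally show ?case using pullback_cong[OF c central_series_step(2)[OF c]] step by simp
qed

lemma nilpotent_central_series:
  assumes "nilpotent_right_loop A m e"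
  shows "\<exists>n. central_series n = A \<times> A"
proof -
  obtain n where n: "upper_central A m e n = A" using assms unfolding nilpotent_right_loop_def by blast
  have c: "cong (central_series n)" and u: "central_series n `` {e} = A"
    using central_series_props[of n] n by auto
  have "central_series n = A \<times> A"
  proof
    show "central_series n \<subseteq> A \<times> A" using cong_in[OF c] by auto
    show "A \<times> A \<subseteq> central_series n"
      using u cong_sym[OF c] cong_trans[OF c] by blast
  qed
  then show ?thesis by blast
qed

end

section \<open>The action of a group on a right transversal\<close>

locale transversal_action = group +
  fixes H S :: "'a set"
  assumes subgrp: "subgroup H G"
    and transversal: "right_transversal G H S"
    and generates: "generate G S = carrier G"
begin

definition rep :: "'a \<Rightarrow> 'a" where
  "rep x = (THE t. t \<in> S \<and> t \<in> H #> x)"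

abbreviation act :: "'a \<Rightarrow> 'a \<Rightarrow> 'a" where
  "act \<equiv> transversal_op G H S"

lemma act_rep: "act x y = rep (x \<otimes> y)"
  unfolding transversal_op_def rep_def by simp

lemma S_carrier: "S \<subseteq> carrier G"
  using transversal unfolding right_transversal_def by blast

lemma one_in_S: "\<one> \<in> S"
  using transversal unfolding right_transversal_def by blast

lemma H_carrier: "H \<subseteq> carrier G"
  using subgrp subgroup.subset by blast

lemma unique_rep: "x \<in> carrier G \<Longrightarrow> \<exists>!t. t \<in> S \<and> t \<in> H #> x"
  using transversal unfolding right_transversal_def by blast

lemma rep_prop: "x \<in> carrier G \<Longrightarrow> rep x \<in> S \<and> rep x \<in> H #> x"
  unfolding rep_def by (rule theI'[OF unique_rep])

lemma rep_unique: "x \<in> carrier G \<Longrightarrow> t \<in> S \<Longrightarrow> t \<in> H #> x \<Longrightarrow> rep x = t"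
  using unique_rep rep_prop by blast

lemma rep_in: "x \<in> carrier G \<Longrightarrow> rep x \<in> S"
  using rep_prop by blast

lemma rep_carrier: "x \<in> carrier G \<Longrightarrow> rep x \<in> carrier G"
  using rep_in S_carrier by blast

lemma rep_coset: "x \<in> carrier G \<Longrightarrow> H #> rep x = H #> x"
  using repr_independence[of "rep x" H x] rep_prop subgrp by simp

lemma rep_S: "s \<in> S \<Longrightarrow> rep s = s"
  using rep_unique[of s s] rcos_self[of s H] subgrp S_carrier by auto

text \<open>The representative depends only on the coset; hence it may be taken at any stage of a product.\<close>
lemma rep_mult:
  assumes "x \<in> carrier G" "g \<in> carrier G"
  shows "rep (rep x \<otimes> g) = rep (x \<otimes> g)"
proof (rule rep_unique)
  have "H #> (rep x \<otimes> g) = H #> (x \<otimes> g)"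
    using coset_mult_assoc[OF H_carrier rep_carrier[OF assms(1)] assms(2)]
      coset_mult_assoc[OF H_carrier assms] rep_coset[OF assms(1)] by simp
  then show "rep (x \<otimes> g) \<in> H #> (rep x \<otimes> g)"
    using rep_prop[of "x \<otimes> g"] assms by simp
qed (use assms rep_carrier rep_in in auto)

lemma act_in: "x \<in> carrier G \<Longrightarrow> g \<in> carrier G \<Longrightarrow> act x g \<in> S"
  unfolding act_rep by (rule rep_in) simp

lemma act_act:
  assumes "x \<in> carrier G" "g \<in> carrier G" "h \<in> carrier G"
  shows "act (act x g) h = act x (g \<otimes> h)"
  unfolding act_rep using rep_mult[of "x \<otimes> g" h] assms by (simp add: m_assoc)

lemma act_one: "s \<in> S \<Longrightarrow> act s \<one> = s"
  unfolding act_rep using S_carrier rep_S by auto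

lemma transversal_right_loop: "right_loop S act \<one>"
  unfolding right_loop_def
proof (intro conjI ballI one_in_S)
  fix x assume x: "x \<in> S"
  then have xc: "x \<in> carrier G" using S_carrier by auto
  show "act \<one> x = x" "act x \<one> = x" using x xc rep_S by (simp_all add: act_rep)
  fix y assume y: "y \<in> S"
  then have yc: "y \<in> carrier G" using S_carrier by auto
  show "act x y \<in> S" using xc yc act_in by simp
  show "\<exists>!z. z \<in> S \<and> act z x = y"
  proof (rule ex1I[of _ "act y (inv x)"])
    show "act y (inv x) \<in> S \<and> act (act y (inv x)) x = y"
      using act_in act_act[of y "inv x" x] act_one[OF y] xc yc by simp
    fix z assume z: "z \<in> S \<and> act z x = y"
    then have "act y (inv x) = act z (x \<otimes> inv x)"
      using act_act[of z x "inv x"] xc S_carrier by auto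
    then show "z = act y (inv x)" using z xc act_one by simp
  qed
qed

sublocale L: rloop S act \<one>
  unfolding rloop_def by (rule transversal_right_loop)

lemma act_inv:
  assumes "s \<in> S" "a \<in> S"
  shows "act s (inv a) = L.dv s a"
proof -
  have c: "s \<in> carrier G" "a \<in> carrier G" using assms S_carrier by auto
  have "act (act s (inv a)) a = s" using act_act[of s "inv a" a] c act_one[OF assms(1)] by simp
  then show ?thesis using L.dv_eq[of "act s (inv a)" a s] act_in c assms by simp
qed

text \<open>An element fixing every point of \<open>S\<close> lies in every conjugate of \<open>H\<close>, so the action is
  faithful when \<open>H\<close> is core-free.\<close>
lemma act_faithful:
  assumes cf: "core_free G H" and g: "g \<in> carrier G" and fixes_S: "\<And>s. s \<in> S \<Longrightarrow> act s g = s"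
  shows "g = \<one>"
proof -
  have "g \<in> {inv x \<otimes> h \<otimes> x | h. h \<in> H}" if xc: "x \<in> carrier G" for x
  proof -
    have sc: "rep x \<in> carrier G" using rep_carrier xc by auto
    have "H #> (rep x \<otimes> g) = H #> rep x"
      using rep_coset[of "rep x \<otimes> g"] fixes_S[OF rep_in[OF xc]] sc g by (simp add: act_rep)
    then have "H #> (x \<otimes> g) = H #> x"
      using coset_mult_assoc[OF H_carrier sc g] coset_mult_assoc[OF H_carrier xc g] rep_coset[OF xc]
      by simp
    then have "x \<otimes> g \<in> H #> x" using repr_independenceD[OF subgrp, of "x \<otimes> g" x] xc g by simp
    then have h: "x \<otimes> g \<otimes> inv x \<in> H" using subgroup.rcos_module_imp[OF subgrp] xc is_group by blast
    have "inv x \<otimes> (x \<otimes> g \<otimes> inv x) \<otimes> x = g"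
      using xc g by (simp add: m_assoc flip: m_assoc[of "inv x" x g])
    then show ?thesis using h by force
  qed
  then show ?thesis using cf unfolding core_free_def by blast
qed


section \<open>Solvability of the group\<close>

text \<open>Since \<open>G\<close> is generated by \<open>S\<close>, each \<open>g\<close> acts as a product of right multiplications and
  right divisions.  Both commute, on a quotient \<open>S/\<theta>\<close>, with left multiplication by a central element.\<close>
lemma act_commutes_central:
  assumes c: "L.cong \<theta>" and z: "z \<in> rloop.central (S // \<theta>) (quot_op act \<theta>)"
    and g: "g \<in> generate G S" and s: "s \<in> S" "s' \<in> S"
    and zs: "\<theta> `` {s'} = quot_op act \<theta> z (\<theta> `` {s})"
  shows "\<theta> `` {act s' g} = quot_op act \<theta> z (\<theta> `` {act s g})"
proof -
  interpret Q: rloop "S // \<theta>" "quot_op act \<theta>" "\<theta> `` {\<one>}" using L.quotient_right_loop[OF c] .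
  note classes = L.class_in_quotient[of _ \<theta>]
  show ?thesis using g s zs
  proof (induction g arbitrary: s s')
    case one
    then show ?case using act_one by simp
  next
    case (incl a)
    have "\<theta> `` {act s' a} = quot_op act \<theta> (\<theta> `` {s'}) (\<theta> `` {a})"
      using L.quot_op_classes[OF c, of s' a] incl by simp
    also have "\<dots> = quot_op act \<theta> z (quot_op act \<theta> (\<theta> `` {s}) (\<theta> `` {a}))"
      using incl Q.central_left_assoc[OF z classes classes] by simp
    also have "\<dots> = quot_op act \<theta> z (\<theta> `` {act s a})"
      using L.quot_op_classes[OF c, of s a] incl by simp
    finally show ?case .
  next
    case (inv a)
    have "\<theta> `` {act s' (inv a)} = Q.dv (\<theta> `` {s'}) (\<theta> `` {a})"
      using act_inv L.quotient_dv[OF c, of a s'] inv by simp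
    also have "\<dots> = quot_op act \<theta> z (Q.dv (\<theta> `` {s}) (\<theta> `` {a}))"
      using inv Q.central_dv_left[OF z classes classes] by simp
    also have "\<dots> = quot_op act \<theta> z (\<theta> `` {act s (inv a)})"
      using L.quotient_dv[OF c, of a s] inv act_inv by simp
    finally show ?case .
  next
    case (eng g h)
    have c: "g \<in> carrier G" "h \<in> carrier G" "s \<in> carrier G" "s' \<in> carrier G"
      using eng generates S_carrier by auto
    have "\<theta> `` {act s' g} = quot_op act \<theta> z (\<theta> `` {act s g})"
      using eng.IH(1)[OF eng.prems] .
    then have "\<theta> `` {act (act s' g) h} = quot_op act \<theta> z (\<theta> `` {act (act s g) h})"
      using eng.IH(2)[of "act s g" "act s' g"] act_in c by blast
    then show ?case using act_act c by simp
  qed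
qed

text \<open>In particular (taking \<open>z\<close> the identity) the action respects every congruence of \<open>S\<close>.\<close>
lemma act_respects_cong:
  assumes c: "L.cong \<theta>" and g: "g \<in> carrier G" and st: "(s, t) \<in> \<theta>"
  shows "(act s g, act t g) \<in> \<theta>"
proof -
  interpret Q: rloop "S // \<theta>" "quot_op act \<theta>" "\<theta> `` {\<one>}" using L.quotient_right_loop[OF c] .
  have S: "s \<in> S" "t \<in> S" using L.cong_in[OF c st] by auto
  then have Sg: "act s g \<in> S" "act t g \<in> S" using act_in g S_carrier by auto
  have "\<theta> `` {t} = quot_op act \<theta> (\<theta> `` {\<one>}) (\<theta> `` {s})"
    using L.class_eq[OF c st] S L.class_in_quotient[of s \<theta>] by simp
  then have "\<theta> `` {act t g} = quot_op act \<theta> (\<theta> `` {\<one>}) (\<theta> `` {act s g})"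
    using act_commutes_central[OF c Q.e_central _ S(1) S(2)] g generates by simp
  then have "\<theta> `` {act s g} = \<theta> `` {act t g}" using L.class_in_quotient[of "act s g" \<theta>] Sg by simp
  then show ?thesis using L.class_eq_iff[OF c] Sg by auto
qed

definition fixer :: "('a \<times> 'a) set \<Rightarrow> 'a set" where
  "fixer \<theta> = {g \<in> carrier G. \<forall>s\<in>S. (act s g, s) \<in> \<theta>}"

lemma fixer_subgroup:
  assumes c: "L.cong \<theta>"
  shows "subgroup (fixer \<theta>) G"
proof (rule subgroupI)
  show "fixer \<theta> \<subseteq> carrier G" unfolding fixer_def by auto
  show "fixer \<theta> \<noteq> {}" using act_one L.cong_refl[OF c] unfolding fixer_def by auto
next
  fix g assume g: "g \<in> fixer \<theta>"
  have gc: "g \<in> carrier G" using g unfolding fixer_def by auto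
  have "(act s (inv g), s) \<in> \<theta>" if s: "s \<in> S" for s
  proof -
    have sc: "s \<in> carrier G" using s S_carrier by auto
    have "act (act s (inv g)) g = s" using act_act[of s "inv g" g] sc gc act_one[OF s] by simp
    moreover have "(act (act s (inv g)) g, act s (inv g)) \<in> \<theta>"
      using g act_in sc gc unfolding fixer_def by auto
    ultimately show ?thesis using L.cong_sym[OF c] by simp
  qed
  then show "inv g \<in> fixer \<theta>" using gc unfolding fixer_def by auto
next
  fix g h assume g: "g \<in> fixer \<theta>" and h: "h \<in> fixer \<theta>"
  have gc: "g \<in> carrier G" "h \<in> carrier G" using g h unfolding fixer_def by auto
  have "(act s (g \<otimes> h), s) \<in> \<theta>" if s: "s \<in> S" for s
  proof -
    have sc: "s \<in> carrier G" using s S_carrier by auto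
    have "(act (act s g) h, act s g) \<in> \<theta>" using h act_in sc gc unfolding fixer_def by auto
    moreover have "(act s g, s) \<in> \<theta>" using g s unfolding fixer_def by auto
    ultimately show ?thesis using L.cong_trans[OF c] act_act sc gc by metis
  qed
  then show "g \<otimes> h \<in> fixer \<theta>" using gc unfolding fixer_def by auto
qed

lemma fixer_next_acts_central:
  assumes c: "L.cong \<theta>"
    and g: "g \<in> fixer (L.pullback \<theta> (rloop.center_rel (S // \<theta>) (quot_op act \<theta>)))" and s: "s \<in> S"
  shows "\<exists>z \<in> rloop.central (S // \<theta>) (quot_op act \<theta>). \<theta> `` {act s g} = quot_op act \<theta> z (\<theta> `` {s})"
proof -
  interpret Q: rloop "S // \<theta>" "quot_op act \<theta>" "\<theta> `` {\<one>}" using L.quotient_right_loop[OF c] .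
  have "(\<theta> `` {act s g}, \<theta> `` {s}) \<in> Q.center_rel" using g s unfolding fixer_def L.pullback_def by auto
  then have "(\<theta> `` {s}, \<theta> `` {act s g}) \<in> Q.center_rel"
    using Q.center_rel_equiv unfolding equiv_def sym_def by blast
  then obtain z where "z \<in> Q.central" "\<theta> `` {act s g} = quot_op act \<theta> (\<theta> `` {s}) z"
    unfolding Q.center_rel_iff by blast
  then show ?thesis using Q.central_comm L.class_in_quotient[OF s] by metis
qed

lemma fixer_next_commute:
  assumes c: "L.cong \<theta>"
    and g1: "g1 \<in> fixer (L.pullback \<theta> (rloop.center_rel (S // \<theta>) (quot_op act \<theta>)))"
    and g2: "g2 \<in> fixer (L.pullback \<theta> (rloop.center_rel (S // \<theta>) (quot_op act \<theta>)))"
    and s: "s \<in> S"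
  shows "(act s (g1 \<otimes> g2), act s (g2 \<otimes> g1)) \<in> \<theta>"
proof -
  interpret Q: rloop "S // \<theta>" "quot_op act \<theta>" "\<theta> `` {\<one>}" using L.quotient_right_loop[OF c] .
  have sc: "s \<in> carrier G" using s S_carrier by auto
  have gc: "g1 \<in> carrier G" "g2 \<in> carrier G" using g1 g2 unfolding fixer_def by auto
  obtain z1 where z1: "z1 \<in> Q.central" "\<theta> `` {act s g1} = quot_op act \<theta> z1 (\<theta> `` {s})"
    using fixer_next_acts_central[OF c g1 s] by blast
  obtain z2 where z2: "z2 \<in> Q.central" "\<theta> `` {act s g2} = quot_op act \<theta> z2 (\<theta> `` {s})"
    using fixer_next_acts_central[OF c g2 s] by blast
  have "\<theta> `` {act (act s g1) g2} = quot_op act \<theta> z1 (\<theta> `` {act s g2})"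
    using act_commutes_central[OF c z1(1), of g2 s "act s g1"] gc generates s sc act_in z1(2) by simp
  then have e1: "\<theta> `` {act s (g1 \<otimes> g2)} = quot_op act \<theta> z1 (quot_op act \<theta> z2 (\<theta> `` {s}))"
    using act_act sc gc z2 by simp
  have "\<theta> `` {act (act s g2) g1} = quot_op act \<theta> z2 (\<theta> `` {act s g1})"
    using act_commutes_central[OF c z2(1), of g1 s "act s g2"] gc generates s sc act_in z2(2) by simp
  then have e2: "\<theta> `` {act s (g2 \<otimes> g1)} = quot_op act \<theta> z2 (quot_op act \<theta> z1 (\<theta> `` {s}))"
    using act_act sc gc z1 by simp
  have "\<theta> `` {act s (g1 \<otimes> g2)} = \<theta> `` {act s (g2 \<otimes> g1)}"
    using e1 e2 Q.central_swap[OF z1(1) z2(1) L.class_in_quotient[OF s]] by simp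
  then show ?thesis using L.class_eq_iff[OF c] act_in sc gc by auto
qed

lemma derived_fixer_step:
  assumes c: "L.cong \<theta>"
  shows "derived G (fixer (L.pullback \<theta> (rloop.center_rel (S // \<theta>) (quot_op act \<theta>)))) \<subseteq> fixer \<theta>"
  unfolding derived_def
proof (rule generate_subgroup_incl[OF _ fixer_subgroup[OF c]])
  let ?K = "fixer (L.pullback \<theta> (rloop.center_rel (S // \<theta>) (quot_op act \<theta>)))"
  show "derived_set G ?K \<subseteq> fixer \<theta>"
  proof clarify
    fix g1 g2 assume g1: "g1 \<in> ?K" and g2: "g2 \<in> ?K"
    have gc: "g1 \<in> carrier G" "g2 \<in> carrier G" using g1 g2 unfolding fixer_def by auto
    define k where "k = inv g1 \<otimes> inv g2"
    have kc: "k \<in> carrier G" using gc unfolding k_def by simp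
    have "(act s (g1 \<otimes> g2 \<otimes> inv g1 \<otimes> inv g2), s) \<in> \<theta>" if s: "s \<in> S" for s
    proof -
      have sc: "s \<in> carrier G" using s S_carrier by auto
      have "(act (act s (g1 \<otimes> g2)) k, act (act s (g2 \<otimes> g1)) k) \<in> \<theta>"
        using act_respects_cong[OF c kc fixer_next_commute[OF c g1 g2 s]] .
      moreover have "act (act s (g1 \<otimes> g2)) k = act s (g1 \<otimes> g2 \<otimes> inv g1 \<otimes> inv g2)"
        using act_act[of s "g1 \<otimes> g2" k] sc gc kc unfolding k_def by (simp add: m_assoc)
      moreover have "(g2 \<otimes> g1) \<otimes> k = \<one>"
        using gc unfolding k_def by (metis inv_mult_group m_closed r_inv)
      then have "act (act s (g2 \<otimes> g1)) k = s" using act_act[of s "g2 \<otimes> g1" k] sc gc kc act_one[OF s] by simp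
      ultimately show ?thesis by simp
    qed
    then show "g1 \<otimes> g2 \<otimes> inv g1 \<otimes> inv g2 \<in> fixer \<theta>" using gc unfolding fixer_def by auto
  qed
qed

lemma derived_fixer_central_series:
  "derived G (fixer (L.central_series (Suc i))) \<subseteq> fixer (L.central_series i)"
  using derived_fixer_step L.central_series_props L.central_series_step(1) by simp

lemma derived_series_in_fixer:
  assumes n: "L.central_series n = S \<times> S" and "k \<le> n"
  shows "(derived G ^^ k) (carrier G) \<subseteq> fixer (L.central_series (n - k))"
  using \<open>k \<le> n\<close>
proof (induction k)
  case 0
  then show ?case using n act_in S_carrier unfolding fixer_def by auto
next
  case (Suc k)
  then have "n - k = Suc (n - Suc k)" by simp
  then have "derived G (fixer (L.central_series (n - k))) \<subseteq> fixer (L.central_series (n - Suc k))"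
    using derived_fixer_central_series by simp
  moreover have "(derived G ^^ Suc k) (carrier G) \<subseteq> derived G (fixer (L.central_series (n - k)))"
    using mono_derived[OF Suc.IH] Suc by simp
  ultimately show ?case by blast
qed

text \<open>Faithfulness makes the fixer of \<open>\<theta>\<^sub>0\<close> trivial, so \<open>G\<close> is solvable.\<close>
theorem solvable_group:
  assumes "core_free G H" "nilpotent_right_loop S act \<one>"
  shows "solvable G"
proof -
  obtain n where n: "L.central_series n = S \<times> S" using L.nilpotent_central_series[OF assms(2)] by blast
  have "fixer (L.central_series 0) \<subseteq> {\<one>}"
    using act_faithful[OF assms(1)] unfolding fixer_def by (auto simp: Id_on_def)
  then have "(derived G ^^ n) (carrier G) \<subseteq> {\<one>}" using derived_series_in_fixer[OF n, of n] by simp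
  moreover have "\<one> \<in> (derived G ^^ n) (carrier G)"
    using subgroup.one_closed[OF exp_of_derived_is_subgroup[OF subgroup_self]] by simp
  ultimately show ?thesis using solvable_iff_trivial_derived_seq by blast
qed

end

lemma solvable_subgroup_group:
  assumes "group G" "subgroup H G" "solvable G"
  shows "solvable (G\<lparr>carrier := H\<rparr>)"
proof -
  have "group_hom (G\<lparr>carrier := H\<rparr>) G id"
    using subgroup.subgroup_is_group[OF assms(2,1)] assms(1) subgroup.subset[OF assms(2)]
    unfolding group_hom_def group_hom_axioms_def hom_def by auto
  then show ?thesis using group_hom.inj_hom_imp_solvable assms(3) by fastforce
qed

theorem mainTheorem16:
  fixes G :: "('a, 'b) monoid_scheme" and H S :: "'a set"
  assumes "group G"
    and "subgroup H G"
    and "core_free G H"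
    and "right_transversal G H S"
    and "generate G S = carrier G"
    and "nilpotent_right_loop S (transversal_op G H S) \<one>\<^bsub>G\<^esub>"
  shows "solvable (G\<lparr>carrier := H\<rparr>)"
proof -
  interpret transversal_action G H S
    using assms(1,2,4,5) unfolding transversal_action_def transversal_action_axioms_def by blast
  have "solvable G" using solvable_group assms(3,6) by blast
  then show ?thesis using solvable_subgroup_group assms(1,2) by blast
qed

end
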